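(* Let $M$ and $N$ be non-trivial $0$-left cancellative monoids with zero. Then their $0$-free product $M*_0N$ is $0$-left cancellative. Dually, if $M$ and $N$ are non-trivial $0$-right cancellative monoids, then $M*_0N$ is $0$-right cancellative.
   Context: A monoid with zero is non-trivial if $0\neq1$. $0$-left cancellative: $st=sr\neq0\Rightarrow t=r$; $0$-right cancellative: $ts=rs\neq0\Rightarrow t=r$. The $0$-free product $M*_0N$ is the coproduct of $M$ and $N$ in the category of monoids with zero and zero-preserving homomorphisms; equivalently it is the Rees quotient $(M*N)/I$ of the monoid free product $M*N$ by the ideal $I$ generated by the zeros of $M$ and $N$. *)

theory Defs
  imports "HOL-Algebra.Group"
begin

definition monoid0 :: "('a, 'm) monoid_scheme \<Rightarrow> 'a \<Rightarrow> bool" where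
  "monoid0 M z \<longleftrightarrow> monoid M \<and> z \<in> carrier M \<and>
     (\<forall>x\<in>carrier M. z \<otimes>\<^bsub>M\<^esub> x = z \<and> x \<otimes>\<^bsub>M\<^esub> z = z)"

definition nontrivial0 :: "('a, 'm) monoid_scheme \<Rightarrow> 'a \<Rightarrow> bool" where
  "nontrivial0 M z \<longleftrightarrow> z \<noteq> \<one>\<^bsub>M\<^esub>"

definition zero_left_cancel :: "('a, 'm) monoid_scheme \<Rightarrow> 'a \<Rightarrow> bool" where
  "zero_left_cancel M z \<longleftrightarrow>
     (\<forall>s\<in>carrier M. \<forall>t\<in>carrier M. \<forall>r\<in>carrier M.
        s \<otimes>\<^bsub>M\<^esub> t = s \<otimes>\<^bsub>M\<^esub> r \<and> s \<otimes>\<^bsub>M\<^esub> t \<noteq> z \<longrightarrow> t = r)"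

definition zero_right_cancel :: "('a, 'm) monoid_scheme \<Rightarrow> 'a \<Rightarrow> bool" where
  "zero_right_cancel M z \<longleftrightarrow>
     (\<forall>s\<in>carrier M. \<forall>t\<in>carrier M. \<forall>r\<in>carrier M.
        t \<otimes>\<^bsub>M\<^esub> s = r \<otimes>\<^bsub>M\<^esub> s \<and> t \<otimes>\<^bsub>M\<^esub> s \<noteq> z \<longrightarrow> t = r)"

text \<open>Elements of the 0-free product (the Rees quotient of the free product M*N by the
ideal generated by the two zeros) are represented by their normal forms:
\<open>None\<close> is the zero, and \<open>Some w\<close> is a reduced word, i.e. an alternating word whose
letters are non-identity, non-zero elements of M (tagged Inl) or of N (tagged Inr).\<close>

definition reduced_word ::
  "('a, 'm) monoid_scheme \<Rightarrow> 'a \<Rightarrow> ('b, 'n) monoid_scheme \<Rightarrow> 'b \<Rightarrow> ('a + 'b) list \<Rightarrow> bool" where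
  "reduced_word M zM N zN w \<longleftrightarrow>
     (\<forall>x\<in>set w. case x of
         Inl a \<Rightarrow> a \<in> carrier M \<and> a \<noteq> zM \<and> a \<noteq> \<one>\<^bsub>M\<^esub>
       | Inr b \<Rightarrow> b \<in> carrier N \<and> b \<noteq> zN \<and> b \<noteq> \<one>\<^bsub>N\<^esub>) \<and>
     (\<forall>i. Suc i < length w \<longrightarrow> isl (w ! i) \<noteq> isl (w ! Suc i))"

definition push_letter ::
  "('a, 'm) monoid_scheme \<Rightarrow> 'a \<Rightarrow> ('b, 'n) monoid_scheme \<Rightarrow> 'b \<Rightarrow>
   'a + 'b \<Rightarrow> ('a + 'b) list option \<Rightarrow> ('a + 'b) list option" where
  "push_letter M zM N zN x u =
     (case u of
        None \<Rightarrow> None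
      | Some [] \<Rightarrow> Some [x]
      | Some (y # w) \<Rightarrow>
          (case (x, y) of
             (Inl a, Inl b) \<Rightarrow>
               (let c = a \<otimes>\<^bsub>M\<^esub> b in
                  if c = zM then None else if c = \<one>\<^bsub>M\<^esub> then Some w else Some (Inl c # w))
           | (Inr a, Inr b) \<Rightarrow>
               (let c = a \<otimes>\<^bsub>N\<^esub> b in
                  if c = zN then None else if c = \<one>\<^bsub>N\<^esub> then Some w else Some (Inr c # w))
           | _ \<Rightarrow> Some (x # y # w)))"

definition free_prod0_mult ::
  "('a, 'm) monoid_scheme \<Rightarrow> 'a \<Rightarrow> ('b, 'n) monoid_scheme \<Rightarrow> 'b \<Rightarrow>
   ('a + 'b) list option \<Rightarrow> ('a + 'b) list option \<Rightarrow> ('a + 'b) list option" where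
  "free_prod0_mult M zM N zN u v =
     (case u of None \<Rightarrow> None | Some w \<Rightarrow> foldr (push_letter M zM N zN) w v)"

definition free_prod0 ::
  "('a, 'm) monoid_scheme \<Rightarrow> 'a \<Rightarrow> ('b, 'n) monoid_scheme \<Rightarrow> 'b \<Rightarrow>
   ('a + 'b) list option monoid" where
  "free_prod0 M zM N zN =
     \<lparr> carrier = insert None (Some ` {w. reduced_word M zM N zN w}),
       mult = free_prod0_mult M zM N zN,
       one = Some [] \<rparr>"

end

theory Submission
  imports Defs
begin

text \<open>Elements of \<open>M *\<^sub>0 N\<close> are the zero \<open>None\<close> or reduced alternating words, and
left multiplication by a word is the composite of the left multiplications \<open>push x\<close> by its
letters. Every element can be written as \<open>d w\<close> with \<open>d\<close> in a prescribed factor (possibly its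
identity or its zero) and \<open>w\<close> not starting in that factor, and then \<open>x (d w) = (x d) w\<close>.
Hence \<open>push x\<close> is injective away from the zero because the factor of \<open>x\<close> is 0-left
cancellative, and left cancellation follows by induction on the length of the left factor.
The same computation shows that the factors act on normal forms by a monoid action, which gives
associativity; so right multiplication by a word is the composite of right multiplications by its
letters, and these are handled by the mirror-image decomposition \<open>w d\<close> at the last letter.\<close>

lemma successively_iff_nth:
  "successively P xs \<longleftrightarrow> (\<forall>i. Suc i < length xs \<longrightarrow> P (xs ! i) (xs ! Suc i))"
  by (induction P xs rule: successively.induct) (auto simp: nth_Cons split: nat.splits)

lemma zero_left_cancelD:
  assumes "zero_left_cancel M z" "s \<in> carrier M" "t \<in> carrier M" "r \<in> carrier M"
    and "s \<otimes>\<^bsub>M\<^esub> t = s \<otimes>\<^bsub>M\<^esub> r" "s \<otimes>\<^bsub>M\<^esub> t \<noteq> z"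
  shows "t = r"
  using assms unfolding zero_left_cancel_def by blast

lemma zero_right_cancelD:
  assumes "zero_right_cancel M z" "s \<in> carrier M" "t \<in> carrier M" "r \<in> carrier M"
    and "t \<otimes>\<^bsub>M\<^esub> s = r \<otimes>\<^bsub>M\<^esub> s" "t \<otimes>\<^bsub>M\<^esub> s \<noteq> z"
  shows "t = r"
  using assms unfolding zero_right_cancel_def by blast

locale monoid0_pair =
  fixes M :: "('a, 'm) monoid_scheme" and zM :: 'a and N :: "('b, 'n) monoid_scheme" and zN :: 'b
  assumes monoid0_M: "monoid0 M zM" and monoid0_N: "monoid0 N zN"
    and nontrivial_M: "nontrivial0 M zM" and nontrivial_N: "nontrivial0 N zN"
begin

abbreviation FP :: "('a + 'b) list option monoid" where
  "FP \<equiv> free_prod0 M zM N zN"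
abbreviation push :: "'a + 'b \<Rightarrow> ('a + 'b) list option \<Rightarrow> ('a + 'b) list option" where
  "push \<equiv> push_letter M zM N zN"
abbreviation reduced :: "('a + 'b) list \<Rightarrow> bool" where
  "reduced \<equiv> reduced_word M zM N zN"

lemma monoid_M: "monoid M" and monoid_N: "monoid N"
  and zero_closed_M: "zM \<in> carrier M" and zero_closed_N: "zN \<in> carrier N"
  and zero_mult_M: "\<And>a. a \<in> carrier M \<Longrightarrow> zM \<otimes>\<^bsub>M\<^esub> a = zM"
  and mult_zero_M: "\<And>a. a \<in> carrier M \<Longrightarrow> a \<otimes>\<^bsub>M\<^esub> zM = zM"
  and zero_mult_N: "\<And>b. b \<in> carrier N \<Longrightarrow> zN \<otimes>\<^bsub>N\<^esub> b = zN"
  and mult_zero_N: "\<And>b. b \<in> carrier N \<Longrightarrow> b \<otimes>\<^bsub>N\<^esub> zN = zN"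
  and zero_neq_one_M: "zM \<noteq> \<one>\<^bsub>M\<^esub>" and zero_neq_one_N: "zN \<noteq> \<one>\<^bsub>N\<^esub>"
  using monoid0_M monoid0_N nontrivial_M nontrivial_N
  by (auto simp: monoid0_def nontrivial0_def)

definition in_factor :: "'a + 'b \<Rightarrow> bool" where
  "in_factor x = (case x of Inl a \<Rightarrow> a \<in> carrier M | Inr b \<Rightarrow> b \<in> carrier N)"

definition is_zero :: "'a + 'b \<Rightarrow> bool" where
  "is_zero x = (case x of Inl a \<Rightarrow> a = zM | Inr b \<Rightarrow> b = zN)"

definition is_one :: "'a + 'b \<Rightarrow> bool" where
  "is_one x = (case x of Inl a \<Rightarrow> a = \<one>\<^bsub>M\<^esub> | Inr b \<Rightarrow> b = \<one>\<^bsub>N\<^esub>)"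

definition letter :: "'a + 'b \<Rightarrow> bool" where
  "letter x \<longleftrightarrow> in_factor x \<and> \<not> is_zero x \<and> \<not> is_one x"

definition factor_mult :: "'a + 'b \<Rightarrow> 'a + 'b \<Rightarrow> 'a + 'b" where
  "factor_mult x y = (case (x, y) of
       (Inl a, Inl b) \<Rightarrow> Inl (a \<otimes>\<^bsub>M\<^esub> b)
     | (Inr a, Inr b) \<Rightarrow> Inr (a \<otimes>\<^bsub>N\<^esub> b)
     | _ \<Rightarrow> x)"

lemma in_factor_factor_mult:
  "in_factor x \<Longrightarrow> in_factor y \<Longrightarrow> in_factor (factor_mult x y)"
  using monoid_M monoid_N
  by (cases x; cases y) (auto simp: in_factor_def factor_mult_def monoid.m_closed)

lemma isl_factor_mult: "isl (factor_mult x y) = isl x"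
  by (cases x; cases y) (auto simp: factor_mult_def)

lemma is_zero_factor_mult:
  assumes "in_factor x" "in_factor y" "isl x = isl y" "is_zero x \<or> is_zero y"
  shows "is_zero (factor_mult x y)"
  using assms zero_mult_M mult_zero_M zero_mult_N mult_zero_N
  by (cases x; cases y) (auto simp: in_factor_def is_zero_def factor_mult_def)

lemma factor_mult_one_left:
  "in_factor y \<Longrightarrow> isl x = isl y \<Longrightarrow> is_one x \<Longrightarrow> factor_mult x y = y"
  using monoid_M monoid_N
  by (cases x; cases y) (auto simp: in_factor_def is_one_def factor_mult_def monoid.l_one)

lemma factor_mult_one_right:
  "in_factor x \<Longrightarrow> isl x = isl y \<Longrightarrow> is_one y \<Longrightarrow> factor_mult x y = x"
  using monoid_M monoid_N
  by (cases x; cases y) (auto simp: in_factor_def is_one_def factor_mult_def monoid.r_one)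

lemma factor_mult_assoc:
  assumes "in_factor x" "in_factor y" "in_factor z" "isl x = isl y" "isl y = isl z"
  shows "factor_mult (factor_mult x y) z = factor_mult x (factor_mult y z)"
  using assms monoid_M monoid_N
  by (cases x; cases y; cases z; auto simp: in_factor_def factor_mult_def
      monoid.m_closed monoid.m_assoc)

lemma factor_mult_left_cancel:
  assumes "zero_left_cancel M zM" "zero_left_cancel N zN"
    and "in_factor x" "in_factor y" "in_factor y'" "isl y = isl x" "isl y' = isl x"
    and "factor_mult x y = factor_mult x y'" "\<not> is_zero (factor_mult x y)"
  shows "y = y'"
  using assms(3-) zero_left_cancelD[OF assms(1)] zero_left_cancelD[OF assms(2)]
  by (cases x; cases y; cases y') (auto simp: in_factor_def factor_mult_def is_zero_def)

lemma factor_mult_right_cancel: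
  assumes "zero_right_cancel M zM" "zero_right_cancel N zN"
    and "in_factor x" "in_factor y" "in_factor y'" "isl y = isl x" "isl y' = isl x"
    and "factor_mult y x = factor_mult y' x" "\<not> is_zero (factor_mult y x)"
  shows "y = y'"
  using assms(3-) zero_right_cancelD[OF assms(1)] zero_right_cancelD[OF assms(2)]
  by (cases x; cases y; cases y') (auto simp: in_factor_def factor_mult_def is_zero_def)

lemma is_one_unique:
  "in_factor x \<Longrightarrow> in_factor y \<Longrightarrow> isl x = isl y \<Longrightarrow> is_one x \<Longrightarrow> is_one y \<Longrightarrow> x = y"
  by (cases x; cases y; auto simp: is_one_def)

text \<open>This is the only use of non-triviality: the identity of a factor must not be its zero
  for \<open>cons_nf\<close> and \<open>snoc_nf\<close> below to reproduce every reduced word.\<close>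

lemma exists_one_in_factor:
  "\<exists>e. in_factor e \<and> isl e = s \<and> is_one e \<and> \<not> is_zero e"
  using monoid_M monoid_N zero_neq_one_M zero_neq_one_N
  by (intro exI[of _ "if s then Inl \<one>\<^bsub>M\<^esub> else Inr \<one>\<^bsub>N\<^esub>"])
    (auto simp: in_factor_def is_one_def is_zero_def monoid.one_closed)

lemma exists_zero_in_factor: "\<exists>z. in_factor z \<and> isl z = s \<and> is_zero z"
  using zero_closed_M zero_closed_N
  by (intro exI[of _ "if s then Inl zM else Inr zN"])
    (auto simp: in_factor_def is_zero_def)

subsection \<open>Reduced words and normal forms\<close>

lemma reduced_iff: "reduced w \<longleftrightarrow> (\<forall>x\<in>set w. letter x) \<and> successively (\<lambda>x y. isl x \<noteq> isl y) w"
proof -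
  have "(case x of Inl a \<Rightarrow> a \<in> carrier M \<and> a \<noteq> zM \<and> a \<noteq> \<one>\<^bsub>M\<^esub>
          | Inr b \<Rightarrow> b \<in> carrier N \<and> b \<noteq> zN \<and> b \<noteq> \<one>\<^bsub>N\<^esub>) = letter x" for x
    by (auto simp: letter_def in_factor_def is_zero_def is_one_def split: sum.splits)
  then show ?thesis
    by (simp add: reduced_word_def successively_iff_nth)
qed

lemma reduced_Nil [simp]: "reduced []"
  by (simp add: reduced_iff)

lemma reduced_Cons:
  "reduced (x # w) \<longleftrightarrow> letter x \<and> reduced w \<and> (w = [] \<or> isl (hd w) \<noteq> isl x)"
  by (auto simp: reduced_iff successively_Cons)

lemma reduced_snoc:
  "reduced (w @ [x]) \<longleftrightarrow> reduced w \<and> letter x \<and> (w = [] \<or> isl (last w) \<noteq> isl x)"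
  by (auto simp: reduced_iff successively_append_iff)

lemma None_in_carrier [simp]: "None \<in> carrier FP"
  by (simp add: free_prod0_def)

lemma Some_in_carrier_iff [simp]: "Some w \<in> carrier FP \<longleftrightarrow> reduced w"
  by (auto simp: free_prod0_def)

lemma mult_None_left [simp]: "None \<otimes>\<^bsub>FP\<^esub> v = None"
  by (simp add: free_prod0_def free_prod0_mult_def)

lemma mult_Nil_left [simp]: "Some [] \<otimes>\<^bsub>FP\<^esub> v = v"
  by (simp add: free_prod0_def free_prod0_mult_def)

lemma mult_Cons_left [simp]: "Some (x # w) \<otimes>\<^bsub>FP\<^esub> v = push x (Some w \<otimes>\<^bsub>FP\<^esub> v)"
  by (simp add: free_prod0_def free_prod0_mult_def)

lemma push_None [simp]: "push x None = None"
  by (simp add: push_letter_def)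

lemma push_Nil [simp]: "push x (Some []) = Some [x]"
  by (simp add: push_letter_def)

lemma mult_None_right [simp]: "t \<otimes>\<^bsub>FP\<^esub> None = None"
proof (cases t)
  case (Some w)
  have "Some w \<otimes>\<^bsub>FP\<^esub> None = None"
    by (induction w) simp_all
  with Some show ?thesis by simp
qed simp

text \<open>If \<open>w\<close> is reduced and does not start (end) in the factor of \<open>d\<close>, then \<open>cons_nf d w\<close>
  (\<open>snoc_nf w d\<close>) is the normal form of the product \<open>d w\<close> (\<open>w d\<close>).\<close>

definition cons_nf :: "'a + 'b \<Rightarrow> ('a + 'b) list \<Rightarrow> ('a + 'b) list option" where
  "cons_nf d w = (if is_zero d then None else if is_one d then Some w else Some (d # w))"

definition snoc_nf :: "('a + 'b) list \<Rightarrow> 'a + 'b \<Rightarrow> ('a + 'b) list option" where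
  "snoc_nf w d = (if is_zero d then None else if is_one d then Some w else Some (w @ [d]))"

lemma push_Cons:
  "push x (Some (y # w)) =
     (if isl x = isl y then cons_nf (factor_mult x y) w else Some (x # y # w))"
  by (cases x; cases y)
    (simp_all add: push_letter_def cons_nf_def factor_mult_def is_zero_def is_one_def Let_def)

lemma cons_nf_in_carrier:
  "in_factor d \<Longrightarrow> reduced w \<Longrightarrow> w = [] \<or> isl (hd w) \<noteq> isl d \<Longrightarrow> cons_nf d w \<in> carrier FP"
  by (auto simp: cons_nf_def reduced_Cons letter_def)

lemma push_reduced_Cons: "reduced (x # w) \<Longrightarrow> push x (Some w) = Some (x # w)"
  by (cases w) (auto simp: reduced_Cons push_Cons)

lemma Some_mult_Some: "reduced (u @ v) \<Longrightarrow> Some u \<otimes>\<^bsub>FP\<^esub> Some v = Some (u @ v)"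
  by (induction u) (auto simp: reduced_Cons push_reduced_Cons)

lemma mult_Nil_right: "t \<in> carrier FP \<Longrightarrow> t \<otimes>\<^bsub>FP\<^esub> Some [] = t"
  using Some_mult_Some[of _ "[]"] by (cases t) auto

lemma carrier_eq_cons_nf:
  assumes "m \<in> carrier FP"
  obtains d w where "in_factor d" "isl d = s" "reduced w" "w = [] \<or> isl (hd w) \<noteq> s"
    "m = cons_nf d w"
proof (cases m)
  case None
  obtain z where "in_factor z" "isl z = s" "is_zero z"
    using exists_zero_in_factor by blast
  with None show ?thesis
    using that[of z "[]"] by (simp add: cons_nf_def)
next
  case (Some u)
  have u: "reduced u"
    using assms Some by simp
  show ?thesis
  proof (cases "u = [] \<or> isl (hd u) \<noteq> s")
    case True
    obtain e where "in_factor e" "isl e = s" "is_one e" "\<not> is_zero e"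
      using exists_one_in_factor by blast
    with True u Some show ?thesis
      using that[of e u] by (simp add: cons_nf_def)
  next
    case False
    then obtain d w where "u = d # w" "isl d = s"
      by (cases u) auto
    with u Some show ?thesis
      using that[of d w] by (simp add: cons_nf_def reduced_Cons letter_def)
  qed
qed

lemma carrier_eq_snoc_nf:
  assumes "m \<in> carrier FP"
  obtains d w where "in_factor d" "isl d = s" "reduced w" "w = [] \<or> isl (last w) \<noteq> s"
    "m = snoc_nf w d"
proof (cases m)
  case None
  obtain z where "in_factor z" "isl z = s" "is_zero z"
    using exists_zero_in_factor by blast
  with None show ?thesis
    using that[of z "[]"] by (simp add: snoc_nf_def)
next
  case (Some u)
  have u: "reduced u"
    using assms Some by simp
  show ?thesis
  proof (cases "u = [] \<or> isl (last u) \<noteq> s")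
    case True
    obtain e where "in_factor e" "isl e = s" "is_one e" "\<not> is_zero e"
      using exists_one_in_factor by blast
    with True u Some show ?thesis
      using that[of e u] by (simp add: snoc_nf_def)
  next
    case False
    then obtain d w where "u = w @ [d]" "isl d = s"
      by (cases u rule: rev_cases) auto
    with u Some show ?thesis
      using that[of d w] by (simp add: snoc_nf_def reduced_snoc letter_def)
  qed
qed

lemma cons_nf_inj:
  assumes "in_factor d" "in_factor d'" "isl d = isl d'"
    "w = [] \<or> isl (hd w) \<noteq> isl d" "w' = [] \<or> isl (hd w') \<noteq> isl d"
    "cons_nf d w = cons_nf d' w'" "cons_nf d w \<noteq> None"
  shows "d = d'" "w = w'"
  using assms is_one_unique[of d d'] by (auto simp: cons_nf_def split: if_splits)

lemma snoc_nf_inj: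
  assumes "in_factor d" "in_factor d'" "isl d = isl d'"
    "w = [] \<or> isl (last w) \<noteq> isl d" "w' = [] \<or> isl (last w') \<noteq> isl d"
    "snoc_nf w d = snoc_nf w' d'" "snoc_nf w d \<noteq> None"
  shows "d = d'" "w = w'"
  using assms is_one_unique[of d d'] by (auto simp: snoc_nf_def split: if_splits)

subsection \<open>Closure and associativity\<close>

definition left_act :: "'a + 'b \<Rightarrow> ('a + 'b) list option \<Rightarrow> ('a + 'b) list option" where
  "left_act d m = (if is_zero d then None else if is_one d then m else push d m)"

lemma push_eq_left_act: "letter x \<Longrightarrow> push x m = left_act x m"
  by (simp add: left_act_def letter_def)

lemma cons_nf_mult: "cons_nf d w \<otimes>\<^bsub>FP\<^esub> v = left_act d (Some w \<otimes>\<^bsub>FP\<^esub> v)"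
  by (simp add: cons_nf_def left_act_def)

lemma left_act_cons_nf:
  assumes "in_factor x" "in_factor d" "isl x = isl d" "w = [] \<or> isl (hd w) \<noteq> isl d"
  shows "left_act x (cons_nf d w) = cons_nf (factor_mult x d) w"
  using assms
  by (cases w) (auto simp: cons_nf_def left_act_def push_Cons is_zero_factor_mult
      factor_mult_one_left factor_mult_one_right)

lemma left_act_left_act:
  assumes "in_factor x" "in_factor y" "isl x = isl y" "m \<in> carrier FP"
  shows "left_act x (left_act y m) = left_act (factor_mult x y) m"
proof -
  obtain d w where d: "in_factor d" "isl d = isl x" "w = [] \<or> isl (hd w) \<noteq> isl x"
    and m: "m = cons_nf d w"
    using carrier_eq_cons_nf[OF assms(4)] by metis
  have "left_act x (left_act y m) = cons_nf (factor_mult x (factor_mult y d)) w"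
    using assms d by (simp add: m left_act_cons_nf in_factor_factor_mult isl_factor_mult)
  also have "\<dots> = cons_nf (factor_mult (factor_mult x y) d) w"
    using assms d by (simp add: factor_mult_assoc)
  also have "\<dots> = left_act (factor_mult x y) m"
    using assms d by (simp add: m left_act_cons_nf in_factor_factor_mult isl_factor_mult)
  finally show ?thesis .
qed

lemma push_in_carrier:
  assumes "letter x" "m \<in> carrier FP"
  shows "push x m \<in> carrier FP"
proof -
  obtain d w where d: "in_factor d" "isl d = isl x" "reduced w" "w = [] \<or> isl (hd w) \<noteq> isl x"
    and m: "m = cons_nf d w"
    using carrier_eq_cons_nf[OF assms(2)] by metis
  have x: "in_factor x"
    using assms(1) by (simp add: letter_def)
  have "push x m = cons_nf (factor_mult x d) w"
    using assms(1) x d by (simp add: m push_eq_left_act left_act_cons_nf)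
  then show ?thesis
    using x d by (simp add: cons_nf_in_carrier in_factor_factor_mult isl_factor_mult)
qed

lemma mult_in_carrier:
  assumes "t \<in> carrier FP" "u \<in> carrier FP"
  shows "t \<otimes>\<^bsub>FP\<^esub> u \<in> carrier FP"
proof (cases t)
  case (Some w)
  have "reduced w \<Longrightarrow> Some w \<otimes>\<^bsub>FP\<^esub> u \<in> carrier FP"
    by (induction w) (simp_all add: assms(2) reduced_Cons push_in_carrier)
  with assms(1) Some show ?thesis by simp
qed simp

lemma push_mult:
  assumes "letter x" "m \<in> carrier FP" "v \<in> carrier FP"
  shows "push x m \<otimes>\<^bsub>FP\<^esub> v = push x (m \<otimes>\<^bsub>FP\<^esub> v)"
proof (cases m)
  case (Some u)
  show ?thesis
  proof (cases u)
    case (Cons y w)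
    have y: "letter y" "reduced w"
      using assms(2) Some Cons by (simp_all add: reduced_Cons)
    have wv: "Some w \<otimes>\<^bsub>FP\<^esub> v \<in> carrier FP"
      using y assms(3) by (simp add: mult_in_carrier)
    show ?thesis
    proof (cases "isl x = isl y")
      case True
      have "push x m \<otimes>\<^bsub>FP\<^esub> v = left_act (factor_mult x y) (Some w \<otimes>\<^bsub>FP\<^esub> v)"
        using True by (simp add: Some Cons push_Cons cons_nf_mult)
      also have "\<dots> = left_act x (left_act y (Some w \<otimes>\<^bsub>FP\<^esub> v))"
        using assms(1) y True wv by (simp add: left_act_left_act letter_def)
      also have "\<dots> = push x (m \<otimes>\<^bsub>FP\<^esub> v)"
        using assms(1) y by (simp add: Some Cons push_eq_left_act)
      finally show ?thesis .
    qed (simp add: Some Cons push_Cons)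
  qed (simp add: Some)
qed simp

lemma mult_assoc:
  assumes "t \<in> carrier FP" "u \<in> carrier FP" "v \<in> carrier FP"
  shows "(t \<otimes>\<^bsub>FP\<^esub> u) \<otimes>\<^bsub>FP\<^esub> v = t \<otimes>\<^bsub>FP\<^esub> (u \<otimes>\<^bsub>FP\<^esub> v)"
proof (cases t)
  case (Some w)
  have "reduced w \<Longrightarrow> (Some w \<otimes>\<^bsub>FP\<^esub> u) \<otimes>\<^bsub>FP\<^esub> v = Some w \<otimes>\<^bsub>FP\<^esub> (u \<otimes>\<^bsub>FP\<^esub> v)"
    by (induction w) (simp_all add: assms(2,3) reduced_Cons push_mult mult_in_carrier)
  with assms(1) Some show ?thesis by simp
qed simp

subsection \<open>Cancellation\<close>

lemma push_left_cancel:
  assumes "zero_left_cancel M zM" "zero_left_cancel N zN"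
    and "letter x" "m \<in> carrier FP" "m' \<in> carrier FP"
    and "push x m = push x m'" "push x m \<noteq> None"
  shows "m = m'"
proof -
  obtain d w where d: "in_factor d" "isl d = isl x" "w = [] \<or> isl (hd w) \<noteq> isl x"
    and m: "m = cons_nf d w"
    using carrier_eq_cons_nf[OF assms(4)] by metis
  obtain d' w' where d': "in_factor d'" "isl d' = isl x" "w' = [] \<or> isl (hd w') \<noteq> isl x"
    and m': "m' = cons_nf d' w'"
    using carrier_eq_cons_nf[OF assms(5)] by metis
  have x: "in_factor x"
    using assms(3) by (simp add: letter_def)
  have "push x m = cons_nf (factor_mult x d) w" "push x m' = cons_nf (factor_mult x d') w'"
    using assms(3) x d d' by (simp_all add: m m' push_eq_left_act left_act_cons_nf)
  with assms(6,7) have eq: "cons_nf (factor_mult x d) w = cons_nf (factor_mult x d') w'"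
    and nonzero: "cons_nf (factor_mult x d) w \<noteq> None"
    by simp_all
  have "factor_mult x d = factor_mult x d'" "w = w'"
    using cons_nf_inj[OF _ _ _ _ _ eq nonzero] x d d'
    by (simp_all add: in_factor_factor_mult isl_factor_mult)
  moreover have "\<not> is_zero (factor_mult x d)"
    using nonzero by (auto simp: cons_nf_def)
  ultimately show ?thesis
    using factor_mult_left_cancel[OF assms(1,2) x d(1) d'(1)] d d' by (simp add: m m')
qed

lemma zero_left_cancel_free_prod0:
  assumes "zero_left_cancel M zM" "zero_left_cancel N zN"
  shows "zero_left_cancel FP None"
proof -
  have "t = r"
    if "reduced w" "t \<in> carrier FP" "r \<in> carrier FP"
      "Some w \<otimes>\<^bsub>FP\<^esub> t = Some w \<otimes>\<^bsub>FP\<^esub> r" "Some w \<otimes>\<^bsub>FP\<^esub> t \<noteq> None"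
    for w t r
    using that
  proof (induction w)
    case (Cons x w)
    have x: "letter x" "reduced w"
      using Cons.prems(1) by (simp_all add: reduced_Cons)
    have "Some w \<otimes>\<^bsub>FP\<^esub> t \<noteq> None"
      using Cons.prems(5) by (metis mult_Cons_left push_None)
    moreover have "Some w \<otimes>\<^bsub>FP\<^esub> t = Some w \<otimes>\<^bsub>FP\<^esub> r"
      using push_left_cancel[OF assms x(1)] Cons.prems x(2) by (simp add: mult_in_carrier)
    ultimately show ?case
      using Cons.IH x(2) Cons.prems(2,3) by blast
  qed simp
  then show ?thesis
    unfolding zero_left_cancel_def by (metis Some_in_carrier_iff mult_None_left not_None_eq)
qed

lemma Some_mult_cons_nf_Nil:
  assumes "reduced w" "in_factor d" "w = [] \<or> isl (last w) \<noteq> isl d"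
  shows "Some w \<otimes>\<^bsub>FP\<^esub> cons_nf d [] = snoc_nf w d"
  using assms Some_mult_Some[of w "[d]"] mult_Nil_right[of "Some w"]
  by (auto simp: cons_nf_def snoc_nf_def reduced_snoc letter_def)

lemma snoc_nf_mult_letter:
  assumes "letter y" "in_factor d" "isl d = isl y" "reduced w" "w = [] \<or> isl (last w) \<noteq> isl y"
  shows "snoc_nf w d \<otimes>\<^bsub>FP\<^esub> Some [y] = snoc_nf w (factor_mult d y)"
proof -
  have y: "in_factor y" "cons_nf y [] = Some [y]"
    using assms(1) by (simp_all add: letter_def cons_nf_def)
  have "snoc_nf w d \<otimes>\<^bsub>FP\<^esub> Some [y] = (Some w \<otimes>\<^bsub>FP\<^esub> cons_nf d []) \<otimes>\<^bsub>FP\<^esub> Some [y]"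
    using assms by (simp add: Some_mult_cons_nf_Nil)
  also have "\<dots> = Some w \<otimes>\<^bsub>FP\<^esub> (cons_nf d [] \<otimes>\<^bsub>FP\<^esub> Some [y])"
    using assms by (simp add: mult_assoc cons_nf_in_carrier reduced_Cons)
  also have "\<dots> = Some w \<otimes>\<^bsub>FP\<^esub> cons_nf (factor_mult d y) []"
    using assms y by (metis cons_nf_mult left_act_cons_nf mult_Nil_left)
  also have "\<dots> = snoc_nf w (factor_mult d y)"
    using assms y by (simp add: Some_mult_cons_nf_Nil in_factor_factor_mult isl_factor_mult)
  finally show ?thesis .
qed

lemma mult_letter_right_cancel:
  assumes "zero_right_cancel M zM" "zero_right_cancel N zN"
    and "letter y" "t \<in> carrier FP" "t' \<in> carrier FP"
    and "t \<otimes>\<^bsub>FP\<^esub> Some [y] = t' \<otimes>\<^bsub>FP\<^esub> Some [y]" "t \<otimes>\<^bsub>FP\<^esub> Some [y] \<noteq> None"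
  shows "t = t'"
proof -
  obtain d w where d: "in_factor d" "isl d = isl y" "reduced w" "w = [] \<or> isl (last w) \<noteq> isl y"
    and t: "t = snoc_nf w d"
    using carrier_eq_snoc_nf[OF assms(4)] by metis
  obtain d' w' where d': "in_factor d'" "isl d' = isl y" "reduced w'" "w' = [] \<or> isl (last w') \<noteq> isl y"
    and t': "t' = snoc_nf w' d'"
    using carrier_eq_snoc_nf[OF assms(5)] by metis
  have y: "in_factor y"
    using assms(3) by (simp add: letter_def)
  have "t \<otimes>\<^bsub>FP\<^esub> Some [y] = snoc_nf w (factor_mult d y)"
    "t' \<otimes>\<^bsub>FP\<^esub> Some [y] = snoc_nf w' (factor_mult d' y)"
    using assms(3) d d' by (simp_all add: t t' snoc_nf_mult_letter)
  with assms(6,7) have eq: "snoc_nf w (factor_mult d y) = snoc_nf w' (factor_mult d' y)"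
    and nonzero: "snoc_nf w (factor_mult d y) \<noteq> None"
    by simp_all
  have "factor_mult d y = factor_mult d' y" "w = w'"
    using snoc_nf_inj[OF _ _ _ _ _ eq nonzero] y d d'
    by (simp_all add: in_factor_factor_mult isl_factor_mult)
  moreover have "\<not> is_zero (factor_mult d y)"
    using nonzero by (auto simp: snoc_nf_def)
  ultimately show ?thesis
    using factor_mult_right_cancel[OF assms(1,2) y d(1) d'(1)] d d' by (simp add: t t')
qed

lemma zero_right_cancel_free_prod0:
  assumes "zero_right_cancel M zM" "zero_right_cancel N zN"
  shows "zero_right_cancel FP None"
proof -
  have "t = r"
    if "reduced v" "t \<in> carrier FP" "r \<in> carrier FP"
      "t \<otimes>\<^bsub>FP\<^esub> Some v = r \<otimes>\<^bsub>FP\<^esub> Some v" "t \<otimes>\<^bsub>FP\<^esub> Some v \<noteq> None"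
    for v t r
    using that
  proof (induction v arbitrary: t r)
    case Nil
    then show ?case by (simp add: mult_Nil_right)
  next
    case (Cons y v)
    have y: "letter y" "reduced v"
      using Cons.prems(1) by (simp_all add: reduced_Cons)
    have yv: "Some [y] \<in> carrier FP" "Some v \<in> carrier FP"
      using y by (simp_all add: reduced_Cons)
    have "Some (y # v) = Some [y] \<otimes>\<^bsub>FP\<^esub> Some v"
      using Some_mult_Some[of "[y]" v] Cons.prems(1) by simp
    then have split: "q \<otimes>\<^bsub>FP\<^esub> Some (y # v) = (q \<otimes>\<^bsub>FP\<^esub> Some [y]) \<otimes>\<^bsub>FP\<^esub> Some v"
      if "q \<in> carrier FP" for q
      using mult_assoc[OF that yv] by simp
    have "t \<otimes>\<^bsub>FP\<^esub> Some [y] = r \<otimes>\<^bsub>FP\<^esub> Some [y]"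
      using Cons.IH[OF y(2)] Cons.prems(2-5) split[of t] split[of r] yv(1)
      by (simp add: mult_in_carrier)
    moreover have "t \<otimes>\<^bsub>FP\<^esub> Some [y] \<noteq> None"
      using Cons.prems(2,5) split[of t] by (metis mult_None_left)
    ultimately show ?case
      using mult_letter_right_cancel[OF assms y(1)] Cons.prems(2,3) by blast
  qed
  then show ?thesis
    unfolding zero_right_cancel_def by (metis Some_in_carrier_iff mult_None_right not_None_eq)
qed

end

theorem theorem9p3:
  fixes M :: "('a, 'm) monoid_scheme" and N :: "('b, 'n) monoid_scheme"
    and zM :: 'a and zN :: 'b
  assumes "monoid0 M zM" and "monoid0 N zN"
    and "nontrivial0 M zM" and "nontrivial0 N zN"
  shows "(zero_left_cancel M zM \<and> zero_left_cancel N zN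
            \<longrightarrow> zero_left_cancel (free_prod0 M zM N zN) None)
       \<and> (zero_right_cancel M zM \<and> zero_right_cancel N zN
            \<longrightarrow> zero_right_cancel (free_prod0 M zM N zN) None)"
proof -
  interpret monoid0_pair M zM N zN
    using assms by unfold_locales
  show ?thesis
    using zero_left_cancel_free_prod0 zero_right_cancel_free_prod0 by blast
qed

end
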